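(* Consider the two-layer multi-item order fulfillment problem described in the context with a single FDC ($K=1$), time-invariant variable costs, and given fixed costs $f_0\ge0$, $f_1>0$. Then every online fulfillment policy $\mathrm{ALG}$ (deterministic or randomized) satisfies \[\mathfrak R_{\mathrm{inv}}(\mathrm{ALG})\ge\max\left\{1+\frac{f_0}{f_1},\ \frac54\right\}.\]
   Context: Problem with one FDC (index $1$) and one RDC (index $0$, unlimited inventory). The FDC initially holds $I_{1,0}^i\ge0$ units of item $i$, never replenished. In periods $t=1,\dots,T$ an order $\boldsymbol S_t=(S_t^i)_i$ of nonnegative integers arrives; the policy must immediately and irrevocably choose $m_{0,t}^i,m_{1,t}^i\ge0$ with $m_{0,t}^i+m_{1,t}^i=S_t^i$ and $m_{1,t}^i\le I_{1,t-1}^i$, $I_{1,t}^i=I_{1,0}^i-\sum_{\tau\le t}m_{1,\tau}^i$. Period cost $\sum_{k=0,1}[f_k\mathbb{I}(\sum_im_{k,t}^i>0)+\sum_ic_k^im_{k,t}^i]$; total cost is the sum. An online policy (possibly randomized) decides in period $t$ using only fixed costs, initial inventories, the variable costs and orders up to $t$. $\mathfrak R_{\mathrm{inv}}(\mathrm{ALG})$ is the supremum of $\mathrm{ALG}(I)/\mathrm{OPT}(I)$ ((expected) policy cost over offline optimal cost) over all numbers of items, horizons, initial inventories, nonnegative time-invariant variable costs $c_{k,t}^i=c_k^i$ and order sequences. *)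

theory Defs
  imports "HOL-Probability.Probability"
begin

text \<open>Single FDC (index 1) and RDC (index 0). Items are 0..n-1, periods 1..T.
  Initial FDC inventory I0 i, time-invariant variable costs c0 i, c1 i, orders S t i.
  A plan is given by m1 t i (units of item i shipped from the FDC in period t);
  the RDC ships m0 t i = S t i - m1 t i.\<close>

text \<open>A deterministic online policy: given the number of items, initial inventories,
  variable costs and the list of orders S_1,...,S_t observed so far, it returns the FDC
  shipment vector for the current period t. It does not know the horizon or future orders.
  Fixed costs are fixed parameters of the whole problem.\<close>
type_synonym policy =
  "nat \<Rightarrow> (nat \<Rightarrow> nat) \<Rightarrow> (nat \<Rightarrow> real) \<Rightarrow> (nat \<Rightarrow> real) \<Rightarrow> (nat \<Rightarrow> nat) list \<Rightarrow> (nat \<Rightarrow> nat)"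

definition alg_plan ::
  "policy \<Rightarrow> nat \<Rightarrow> (nat \<Rightarrow> nat) \<Rightarrow> (nat \<Rightarrow> real) \<Rightarrow> (nat \<Rightarrow> real)
   \<Rightarrow> (nat \<Rightarrow> nat \<Rightarrow> nat) \<Rightarrow> (nat \<Rightarrow> nat \<Rightarrow> nat)" where
  "alg_plan P n I0 c0 c1 S = (\<lambda>t. P n I0 c0 c1 (map S [1..<Suc t]))"

definition feasible_plan ::
  "nat \<Rightarrow> nat \<Rightarrow> (nat \<Rightarrow> nat) \<Rightarrow> (nat \<Rightarrow> nat \<Rightarrow> nat) \<Rightarrow> (nat \<Rightarrow> nat \<Rightarrow> nat) \<Rightarrow> bool" where
  "feasible_plan n T I0 S m1 \<longleftrightarrow>
     (\<forall>t\<in>{1..T}. \<forall>i<n. m1 t i \<le> S t i \<and> (\<Sum>\<tau>=1..t. m1 \<tau> i) \<le> I0 i)"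

definition policy_feasible :: "policy \<Rightarrow> bool" where
  "policy_feasible P \<longleftrightarrow>
     (\<forall>n T I0 c0 c1 S. feasible_plan n T I0 S (alg_plan P n I0 c0 c1 S))"

definition valid_costs :: "nat \<Rightarrow> (nat \<Rightarrow> real) \<Rightarrow> (nat \<Rightarrow> real) \<Rightarrow> bool" where
  "valid_costs n c0 c1 \<longleftrightarrow> (\<forall>i<n. 0 \<le> c0 i \<and> 0 \<le> c1 i)"

definition plan_cost ::
  "real \<Rightarrow> real \<Rightarrow> nat \<Rightarrow> nat \<Rightarrow> (nat \<Rightarrow> real) \<Rightarrow> (nat \<Rightarrow> real)
   \<Rightarrow> (nat \<Rightarrow> nat \<Rightarrow> nat) \<Rightarrow> (nat \<Rightarrow> nat \<Rightarrow> nat) \<Rightarrow> real" where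
  "plan_cost f0 f1 n T c0 c1 S m1 =
     (\<Sum>t=1..T.
        (if (\<Sum>i<n. S t i - m1 t i) > 0 then f0 else 0)
      + (\<Sum>i<n. c0 i * real (S t i - m1 t i))
      + (if (\<Sum>i<n. m1 t i) > 0 then f1 else 0)
      + (\<Sum>i<n. c1 i * real (m1 t i)))"

definition OPT ::
  "real \<Rightarrow> real \<Rightarrow> nat \<Rightarrow> nat \<Rightarrow> (nat \<Rightarrow> nat) \<Rightarrow> (nat \<Rightarrow> real) \<Rightarrow> (nat \<Rightarrow> real)
   \<Rightarrow> (nat \<Rightarrow> nat \<Rightarrow> nat) \<Rightarrow> real" where
  "OPT f0 f1 n T I0 c0 c1 S =
     Inf {plan_cost f0 f1 n T c0 c1 S m1 | m1. feasible_plan n T I0 S m1}"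

text \<open>A randomized policy: a probability space M and a deterministic policy P \<omega>
  for each outcome \<omega>. Expected cost of the policy on an instance.\<close>
definition exp_alg_cost ::
  "real \<Rightarrow> real \<Rightarrow> 'w measure \<Rightarrow> ('w \<Rightarrow> policy) \<Rightarrow> nat \<Rightarrow> nat \<Rightarrow> (nat \<Rightarrow> nat)
   \<Rightarrow> (nat \<Rightarrow> real) \<Rightarrow> (nat \<Rightarrow> real) \<Rightarrow> (nat \<Rightarrow> nat \<Rightarrow> nat) \<Rightarrow> ennreal" where
  "exp_alg_cost f0 f1 M P n T I0 c0 c1 S =
     (\<integral>\<^sup>+ \<omega>. ennreal (plan_cost f0 f1 n T c0 c1 S (alg_plan (P \<omega>) n I0 c0 c1 S)) \<partial>M)"

definition R_inv :: "real \<Rightarrow> real \<Rightarrow> 'w measure \<Rightarrow> ('w \<Rightarrow> policy) \<Rightarrow> ennreal" where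
  "R_inv f0 f1 M P =
     (SUP x \<in> {(n, T, I0, c0, c1, S). valid_costs n c0 c1 \<and> OPT f0 f1 n T I0 c0 c1 S > 0}.
        (case x of (n, T, I0, c0, c1, S) \<Rightarrow>
          exp_alg_cost f0 f1 M P n T I0 c0 c1 S / ennreal (OPT f0 f1 n T I0 c0 c1 S)))"

end

theory Submission
  imports Defs "HOL-Real_Asymp.Real_Asymp"
begin

text \<open>The adversary keeps K units of two items in the FDC. Period 1 orders K units of item 0,
  every later period one unit of each item. Item 0 is cheap at the RDC (G/K per unit) and item 1
  costs f1 there, so from period 2 on every period costs at least f1, plus f0 + G/K for each
  unit of item 0 the FDC has run out of. An online policy must fix the period-1 shipment d
  before knowing whether the horizon is 1 (where OPT ships everything from the FDC at cost f1)
  or K + 1 (where OPT pays f0 + G for period 1 and keeps the FDC stock for later). Averaging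
  the two horizons with suitable weights makes every choice of d costly; K = 1 yields 5/4,
  and K = h^2 with h \<rightarrow> \<infinity> yields 1 + f0/f1.\<close>

definition period_cost :: "real \<Rightarrow> real \<Rightarrow> nat \<Rightarrow> (nat \<Rightarrow> real) \<Rightarrow> (nat \<Rightarrow> real)
   \<Rightarrow> (nat \<Rightarrow> nat \<Rightarrow> nat) \<Rightarrow> (nat \<Rightarrow> nat \<Rightarrow> nat) \<Rightarrow> nat \<Rightarrow> real" where
  "period_cost f0 f1 n c0 c1 S m1 t =
        (if (\<Sum>i<n. S t i - m1 t i) > 0 then f0 else 0)
      + (\<Sum>i<n. c0 i * real (S t i - m1 t i))
      + (if (\<Sum>i<n. m1 t i) > 0 then f1 else 0)
      + (\<Sum>i<n. c1 i * real (m1 t i))"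

lemma plan_cost_eq_sum_period_cost:
  "plan_cost f0 f1 n T c0 c1 S m1 = (\<Sum>t=1..T. period_cost f0 f1 n c0 c1 S m1 t)"
  by (simp add: plan_cost_def period_cost_def)

lemma plan_cost_Suc_eq_first_plus_rest:
  "plan_cost f0 f1 n (Suc T) c0 c1 S m1
     = period_cost f0 f1 n c0 c1 S m1 1 + (\<Sum>t=2..Suc T. period_cost f0 f1 n c0 c1 S m1 t)"
  unfolding plan_cost_eq_sum_period_cost
  by (subst sum.atLeast_Suc_atMost) (auto simp: numeral_2_eq_2)

lemma period_cost_nonneg:
  assumes "0 \<le> f0" "0 \<le> f1" "valid_costs n c0 c1"
  shows "0 \<le> period_cost f0 f1 n c0 c1 S m1 t"
  using assms unfolding period_cost_def valid_costs_def
  by (intro add_nonneg_nonneg sum_nonneg mult_nonneg_nonneg) auto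

lemma plan_cost_nonneg:
  assumes "0 \<le> f0" "0 \<le> f1" "valid_costs n c0 c1"
  shows "0 \<le> plan_cost f0 f1 n T c0 c1 S m1"
  unfolding plan_cost_eq_sum_period_cost by (intro sum_nonneg period_cost_nonneg assms)

lemma period_cost_le_plan_cost:
  assumes "0 \<le> f0" "0 \<le> f1" "valid_costs n c0 c1" "t \<in> {1..T}"
  shows "period_cost f0 f1 n c0 c1 S m1 t \<le> plan_cost f0 f1 n T c0 c1 S m1"
  unfolding plan_cost_eq_sum_period_cost
  by (rule member_le_sum) (use assms period_cost_nonneg in auto)

lemma feasible_planD:
  assumes "feasible_plan n T I0 S m1" "t \<in> {1..T}" "i < n"
  shows "m1 t i \<le> S t i" "(\<Sum>\<tau>=1..t. m1 \<tau> i) \<le> I0 i"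
  using assms unfolding feasible_plan_def by auto

lemma OPT_le_plan_cost:
  assumes "feasible_plan n T I0 S m1" "0 \<le> f0" "0 \<le> f1" "valid_costs n c0 c1"
  shows "OPT f0 f1 n T I0 c0 c1 S \<le> plan_cost f0 f1 n T c0 c1 S m1"
  unfolding OPT_def
proof (rule cInf_lower)
  show "bdd_below {plan_cost f0 f1 n T c0 c1 S m1 |m1. feasible_plan n T I0 S m1}"
    by (rule bdd_belowI[of _ 0]) (auto intro: plan_cost_nonneg assms)
qed (use assms in auto)

lemma exp_alg_cost_le_R_inv_mult_OPT:
  assumes "valid_costs n c0 c1" "0 < OPT f0 f1 n T I0 c0 c1 S"
  shows "exp_alg_cost f0 f1 M P n T I0 c0 c1 S \<le> R_inv f0 f1 M P * ennreal (OPT f0 f1 n T I0 c0 c1 S)"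
proof -
  let ?E = "exp_alg_cost f0 f1 M P n T I0 c0 c1 S" and ?O = "ennreal (OPT f0 f1 n T I0 c0 c1 S)"
  have "?E / ?O \<le> R_inv f0 f1 M P"
    unfolding R_inv_def by (rule SUP_upper2[of "(n, T, I0, c0, c1, S)"]) (use assms in auto)
  moreover have "?E = ?E / ?O * ?O"
    using assms(2) by (simp add: ennreal_divide_times)
  ultimately show ?thesis
    by (metis mult_right_mono zero_le)
qed

lemma (in prob_space) ennreal_le_nn_integral_combination:
  assumes "X \<in> borel_measurable M" "Y \<in> borel_measurable M" "0 \<le> A"
    and "\<And>\<omega>. \<omega> \<in> space M \<Longrightarrow> c \<le> A * X \<omega> + Y \<omega> \<and> 0 \<le> X \<omega> \<and> 0 \<le> Y \<omega>"
  shows "ennreal c \<le> ennreal A * (\<integral>\<^sup>+\<omega>. ennreal (X \<omega>) \<partial>M) + (\<integral>\<^sup>+\<omega>. ennreal (Y \<omega>) \<partial>M)"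
proof -
  have "ennreal c = (\<integral>\<^sup>+\<omega>. ennreal c \<partial>M)"
    by (simp add: emeasure_space_1)
  also have "\<dots> \<le> (\<integral>\<^sup>+\<omega>. ennreal A * ennreal (X \<omega>) + ennreal (Y \<omega>) \<partial>M)"
    using assms(3,4) by (intro nn_integral_mono) (simp add: ennreal_leI flip: ennreal_mult ennreal_plus)
  also have "\<dots> = ennreal A * (\<integral>\<^sup>+\<omega>. ennreal (X \<omega>) \<partial>M) + (\<integral>\<^sup>+\<omega>. ennreal (Y \<omega>) \<partial>M)"
    using assms(1,2) by (simp add: nn_integral_add nn_integral_cmult)
  finally show ?thesis .
qed

definition adv_orders :: "nat \<Rightarrow> nat \<Rightarrow> nat \<Rightarrow> nat" where
  "adv_orders K t i = (if t \<le> 1 then (if i = 0 then K else 0) else 1)"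

definition adv_rdc_cost :: "nat \<Rightarrow> real \<Rightarrow> real \<Rightarrow> nat \<Rightarrow> real" where
  "adv_rdc_cost K G f1 i = (if i = 0 then G / real K else f1)"

definition first_period_cost :: "nat \<Rightarrow> real \<Rightarrow> real \<Rightarrow> real \<Rightarrow> nat \<Rightarrow> real" where
  "first_period_cost K G f0 f1 d =
     (if d < K then f0 else 0) + G / real K * (real K - real d) + (if 0 < d then f1 else 0)"

abbreviation adv_feasible :: "nat \<Rightarrow> nat \<Rightarrow> (nat \<Rightarrow> nat \<Rightarrow> nat) \<Rightarrow> bool" where
  "adv_feasible K T m \<equiv> feasible_plan 2 T (\<lambda>_. K) (adv_orders K) m"

abbreviation adv_period_cost ::
    "real \<Rightarrow> real \<Rightarrow> nat \<Rightarrow> real \<Rightarrow> (nat \<Rightarrow> nat \<Rightarrow> nat) \<Rightarrow> nat \<Rightarrow> real" where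
  "adv_period_cost f0 f1 K G m t \<equiv> period_cost f0 f1 2 (adv_rdc_cost K G f1) (\<lambda>_. 0) (adv_orders K) m t"

abbreviation adv_plan_cost ::
    "real \<Rightarrow> real \<Rightarrow> nat \<Rightarrow> real \<Rightarrow> nat \<Rightarrow> (nat \<Rightarrow> nat \<Rightarrow> nat) \<Rightarrow> real" where
  "adv_plan_cost f0 f1 K G T m \<equiv> plan_cost f0 f1 2 T (adv_rdc_cost K G f1) (\<lambda>_. 0) (adv_orders K) m"

abbreviation adv_OPT :: "real \<Rightarrow> real \<Rightarrow> nat \<Rightarrow> real \<Rightarrow> nat \<Rightarrow> real" where
  "adv_OPT f0 f1 K G T \<equiv> OPT f0 f1 2 T (\<lambda>_. K) (adv_rdc_cost K G f1) (\<lambda>_. 0) (adv_orders K)"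

lemma valid_costs_adv: "0 \<le> G \<Longrightarrow> 0 \<le> f1 \<Longrightarrow> valid_costs n (adv_rdc_cost K G f1) (\<lambda>_. 0)"
  by (simp add: valid_costs_def adv_rdc_cost_def)

lemma adv_feasible_first_period:
  assumes "adv_feasible K T m" "1 \<le> T"
  shows "m 1 0 \<le> K" "m 1 1 = 0"
  using feasible_planD(1)[OF assms(1), of 1 0] feasible_planD(1)[OF assms(1), of 1 1] assms(2)
  by (auto simp: adv_orders_def)

lemma adv_period_cost_first:
  assumes "m 1 0 \<le> K" "m 1 1 = 0"
  shows "adv_period_cost f0 f1 K G m 1 = first_period_cost K G f0 f1 (m 1 0)"
  using assms
  by (simp add: period_cost_def first_period_cost_def adv_orders_def adv_rdc_cost_def
      numeral_2_eq_2)

lemma adv_period_cost_later_ge: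
  assumes "2 \<le> t" "m t 0 \<le> 1" "m t 1 \<le> 1" "0 \<le> f0" "0 < f1" "0 \<le> G"
  shows "f1 + (f0 + G / real K) * (1 - real (m t 0)) \<le> adv_period_cost f0 f1 K G m t"
proof -
  have "m t 0 = 0 \<or> m t 0 = 1" "m t 1 = 0 \<or> m t 1 = 1" using assms by auto
  moreover have "0 \<le> G / real K" using assms by simp
  ultimately show ?thesis using assms
    by (elim disjE) (simp_all add: period_cost_def adv_orders_def adv_rdc_cost_def numeral_2_eq_2)
qed

lemma adv_plan_cost_one:
  assumes "adv_feasible K T m" "1 \<le> T"
  shows "adv_plan_cost f0 f1 K G 1 m = first_period_cost K G f0 f1 (m 1 0)"
  using adv_period_cost_first[where m=m and K=K, OF adv_feasible_first_period[OF assms]]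
  by (simp add: plan_cost_eq_sum_period_cost)

text \<open>Each unit shipped from the FDC in period 1 is missing later and costs f0 + G/K again.\<close>
lemma adv_plan_cost_long_ge:
  assumes "adv_feasible K (Suc K) m" "0 \<le> f0" "0 < f1" "0 \<le> G"
  shows "first_period_cost K G f0 f1 (m 1 0) + real K * f1 + (f0 + G / real K) * real (m 1 0)
     \<le> adv_plan_cost f0 f1 K G (Suc K) m"
proof -
  let ?g = "f0 + G / real K"
  have first: "m 1 0 \<le> K" "m 1 1 = 0"
    using adv_feasible_first_period[OF assms(1)] by auto
  have "(\<Sum>\<tau>=1..Suc K. m \<tau> 0) \<le> K"
    using feasible_planD(2)[OF assms(1), of "Suc K" 0] by simp
  moreover have "(\<Sum>\<tau>=1..Suc K. m \<tau> 0) = m 1 0 + (\<Sum>\<tau>=2..Suc K. m \<tau> 0)"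
    by (subst sum.atLeast_Suc_atMost) (auto simp: numeral_2_eq_2)
  ultimately have stock: "real (m 1 0) \<le> real K - real (\<Sum>\<tau>=2..Suc K. m \<tau> 0)"
    by linarith
  have unit: "m t 0 \<le> 1" "m t 1 \<le> 1" if "t \<in> {2..Suc K}" for t
    using feasible_planD(1)[OF assms(1), of t 0] feasible_planD(1)[OF assms(1), of t 1] that
    by (auto simp: adv_orders_def)
  have "real K * f1 + ?g * real (m 1 0)
      \<le> real K * f1 + ?g * (real K - real (\<Sum>\<tau>=2..Suc K. m \<tau> 0))"
    using stock assms by (intro add_left_mono mult_left_mono) auto
  also have "\<dots> = (\<Sum>t=2..Suc K. f1 + ?g * (1 - real (m t 0)))"
    by (simp add: sum.distrib sum_subtractf sum_distrib_left[symmetric] right_diff_distrib)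
  also have "\<dots> \<le> (\<Sum>t=2..Suc K. adv_period_cost f0 f1 K G m t)"
    by (rule sum_mono, rule adv_period_cost_later_ge) (use unit assms in auto)
  finally show ?thesis
    unfolding plan_cost_Suc_eq_first_plus_rest adv_period_cost_first[where m=m and K=K, OF first] by linarith
qed

lemma first_period_cost_ge_min:
  assumes "1 \<le> K" "d \<le> K" "0 \<le> G" "0 \<le> f0"
  shows "min f1 (f0 + G) \<le> first_period_cost K G f0 f1 d"
proof (cases "d = 0")
  case True
  then show ?thesis using assms by (simp add: first_period_cost_def)
next
  case False
  have "first_period_cost K G f0 f1 d = (if d < K then f0 else 0) + G / real K * (real K - real d) + f1"
    using False by (simp add: first_period_cost_def)
  moreover have "0 \<le> (if d < K then f0 else 0)" "0 \<le> G / real K * (real K - real d)"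
    using assms by simp_all
  ultimately show ?thesis
    using min.cobounded1[of f1 "f0 + G"] by linarith
qed

lemma first_period_cost_ge_interpolation:
  assumes "d \<le> K" "1 \<le> K" "0 \<le> f0" "0 \<le> f1"
  shows "f1 + (f0 + G - f1) * ((real K - real d) / real K) \<le> first_period_cost K G f0 f1 d"
proof -
  define u where "u = (real K - real d) / real K"
  have u: "0 \<le> u" "u \<le> 1" using assms by (auto simp: u_def field_simps)
  consider "d = 0" | "d = K" | "0 < d" "d < K" using assms by linarith
  then show ?thesis
  proof cases
    case 1
    then show ?thesis using assms by (simp add: first_period_cost_def)
  next
    case 2
    then show ?thesis using assms by (simp add: first_period_cost_def)
  next
    case 3
    have "f0 * u \<le> f0" "0 \<le> f1 * u"
      using assms u by (simp_all add: mult_left_le)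
    then have "(f0 - f1) * u \<le> f0"
      unfolding left_diff_distrib by linarith
    moreover have "first_period_cost K G f0 f1 d = f0 + G * u + f1"
      using 3 by (simp add: first_period_cost_def u_def)
    ultimately show ?thesis unfolding u_def[symmetric] by (simp add: algebra_simps)
  qed
qed

lemma adv_OPT_ge_min:
  assumes "1 \<le> K" "1 \<le> T" "0 \<le> G" "0 \<le> f0" "0 < f1"
  shows "min f1 (f0 + G) \<le> adv_OPT f0 f1 K G T"
  unfolding OPT_def
proof (rule cInf_greatest)
  have "adv_feasible K T (\<lambda>_ _. 0)" by (simp add: feasible_plan_def)
  then show "{adv_plan_cost f0 f1 K G T m |m. adv_feasible K T m} \<noteq> {}" by blast
next
  fix x assume "x \<in> {adv_plan_cost f0 f1 K G T m |m. adv_feasible K T m}"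
  then obtain m where m: "adv_feasible K T m" and x: "x = adv_plan_cost f0 f1 K G T m"
    by blast
  note first = adv_feasible_first_period[OF m assms(2)]
  have "min f1 (f0 + G) \<le> first_period_cost K G f0 f1 (m 1 0)"
    using first_period_cost_ge_min first assms by auto
  also have "\<dots> = adv_period_cost f0 f1 K G m 1"
    using adv_period_cost_first[where m=m and K=K, OF first] by simp
  also have "\<dots> \<le> x"
    unfolding x using assms by (intro period_cost_le_plan_cost valid_costs_adv) auto
  finally show "min f1 (f0 + G) \<le> x" .
qed

lemma adv_OPT_one_le:
  assumes "1 \<le> K" "0 \<le> G" "0 \<le> f0" "0 < f1"
  shows "adv_OPT f0 f1 K G 1 \<le> f1"
proof -
  have "adv_feasible K 1 (adv_orders K)"
    by (auto simp: feasible_plan_def adv_orders_def)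
  moreover have "adv_plan_cost f0 f1 K G 1 (adv_orders K) = f1"
    using assms by (simp add: plan_cost_eq_sum_period_cost period_cost_def adv_orders_def numeral_2_eq_2)
  ultimately show ?thesis
    using OPT_le_plan_cost assms valid_costs_adv by (metis less_imp_le)
qed

lemma adv_OPT_long_le:
  assumes "1 \<le> K" "0 \<le> G" "0 \<le> f0" "0 < f1"
  shows "adv_OPT f0 f1 K G (Suc K) \<le> f0 + G + real K * f1"
proof -
  define m where "m = (\<lambda>t i. if t \<le> 1 then 0 else adv_orders K t i)"
  have used: "(\<Sum>\<tau>=1..t. m \<tau> i) = t - 1" if "1 \<le> t" for t i
  proof -
    have "(\<Sum>\<tau>=1..t. m \<tau> i) = m 1 i + (\<Sum>\<tau>=Suc 1..t. m \<tau> i)"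
      using that by (subst sum.atLeast_Suc_atMost) auto
    also have "\<dots> = (\<Sum>\<tau>=Suc 1..t. 1)"
      by (auto simp: m_def adv_orders_def intro!: sum.cong)
    finally show ?thesis by simp
  qed
  have feasible: "adv_feasible K (Suc K) m"
    unfolding feasible_plan_def using used by (auto simp: m_def adv_orders_def)
  have first: "adv_period_cost f0 f1 K G m 1 = f0 + G"
    using assms by (simp add: period_cost_def m_def adv_orders_def adv_rdc_cost_def numeral_2_eq_2)
  have later: "(\<Sum>t=2..Suc K. adv_period_cost f0 f1 K G m t) = (\<Sum>t=2..Suc K. f1)"
    using assms
    by (intro sum.cong) (simp_all add: period_cost_def m_def adv_orders_def adv_rdc_cost_def numeral_2_eq_2)
  have "adv_OPT f0 f1 K G (Suc K) \<le> adv_plan_cost f0 f1 K G (Suc K) m"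
    using feasible assms by (intro OPT_le_plan_cost valid_costs_adv) auto
  also have "\<dots> = f0 + G + real K * f1"
    unfolding plan_cost_Suc_eq_first_plus_rest first later by simp
  finally show ?thesis .
qed

lemma adv_exp_alg_cost_le:
  assumes "1 \<le> K" "1 \<le> T" "0 \<le> G" "0 < f0 + G" "0 \<le> f0" "0 < f1" "adv_OPT f0 f1 K G T \<le> b"
  shows "exp_alg_cost f0 f1 M P 2 T (\<lambda>_. K) (adv_rdc_cost K G f1) (\<lambda>_. 0) (adv_orders K)
    \<le> R_inv f0 f1 M P * ennreal b"
proof -
  have "0 < adv_OPT f0 f1 K G T"
    using adv_OPT_ge_min[of K T G f0 f1] assms by linarith
  then have "exp_alg_cost f0 f1 M P 2 T (\<lambda>_. K) (adv_rdc_cost K G f1) (\<lambda>_. 0) (adv_orders K)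
      \<le> R_inv f0 f1 M P * ennreal (adv_OPT f0 f1 K G T)"
    using assms by (intro exp_alg_cost_le_R_inv_mult_OPT valid_costs_adv) auto
  also have "\<dots> \<le> R_inv f0 f1 M P * ennreal b"
    using assms(7) by (intro mult_left_mono ennreal_leI) auto
  finally show ?thesis .
qed

lemma first_period_cost_square_mixture:
  fixes h :: nat and f0 f1 :: real
  defines "G \<equiv> (real h + 1) * f1 - f0"
  assumes "d \<le> h\<^sup>2" "1 \<le> h" "0 \<le> f0" "0 < f1" "f0 \<le> real h * f1"
  shows "real h * f0 + real (h\<^sup>2) * (f0 + f1)
    \<le> (real h * f0 / f1) * first_period_cost (h\<^sup>2) G f0 f1 d + real (h\<^sup>2) * f1
      + (f0 + G / real (h\<^sup>2)) * real d"
proof -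
  let ?K = "real (h\<^sup>2)" and ?w = "real h * f0 / f1"
  have "f1 + (f0 + G - f1) * ((?K - real d) / ?K) \<le> first_period_cost (h\<^sup>2) G f0 f1 d"
    using assms by (intro first_period_cost_ge_interpolation) auto
  moreover have "f0 + G - f1 = real h * f1"
    by (simp add: G_def algebra_simps)
  ultimately have "?w * (f1 + real h * f1 * ((?K - real d) / ?K)) \<le> ?w * first_period_cost (h\<^sup>2) G f0 f1 d"
    using assms by (intro mult_left_mono) auto
  moreover have "?w * (f1 + real h * f1 * ((?K - real d) / ?K)) = real h * f0 + ?K * f0 - f0 * real d"
    using assms by (simp add: field_simps power2_eq_square)
  moreover have "0 \<le> G"
    using assms(5,6) unfolding G_def by (simp add: distrib_right)
  then have "0 \<le> G / ?K * real d"
    by simp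
  ultimately show ?thesis
    unfolding distrib_left distrib_right by linarith
qed

lemma adv_mixture_le_plan_costs:
  assumes "adv_feasible K (Suc K) m" "0 \<le> f0" "0 < f1" "0 \<le> G"
    and mixture: "\<And>d. d \<le> K \<Longrightarrow>
      c \<le> (A + 1) * first_period_cost K G f0 f1 d + real K * f1 + (f0 + G / real K) * real d"
  shows "c \<le> A * adv_plan_cost f0 f1 K G 1 m + adv_plan_cost f0 f1 K G (Suc K) m"
  using mixture[OF adv_feasible_first_period(1)[OF assms(1)]]
    adv_plan_cost_one[OF assms(1)] adv_plan_cost_long_ge[OF assms(1-4)]
  by (simp add: algebra_simps)

context
  fixes f0 f1 :: real and M :: "'w measure" and P :: "'w \<Rightarrow> policy"
  assumes f0: "0 \<le> f0" and f1: "0 < f1"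
    and prob: "prob_space M"
    and feasible: "\<forall>\<omega>\<in>space M. policy_feasible (P \<omega>)"
    and measurable: "\<forall>n T I0 c0 c1 S.
           (\<lambda>\<omega>. plan_cost f0 f1 n T c0 c1 S (alg_plan (P \<omega>) n I0 c0 c1 S)) \<in> borel_measurable M"
begin

text \<open>Yao-type averaging: A weights horizon 1 against horizon K + 1, and the denominator is
  the correspondingly weighted bound on OPT.\<close>
lemma R_inv_ge_adv_mixture:
  assumes K: "1 \<le> K" and G: "0 \<le> G" "0 < f0 + G" and A: "0 \<le> A" and c: "0 \<le> c"
    and mixture: "\<And>d. d \<le> K \<Longrightarrow>
      c \<le> (A + 1) * first_period_cost K G f0 f1 d + real K * f1 + (f0 + G / real K) * real d"
  shows "ennreal (c / (A * f1 + (f0 + G + real K * f1))) \<le> R_inv f0 f1 M P"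
proof -
  define R where "R = R_inv f0 f1 M P"
  define D where "D = A * f1 + (f0 + G + real K * f1)"
  define plan where "plan \<omega> = alg_plan (P \<omega>) 2 (\<lambda>_. K) (adv_rdc_cost K G f1) (\<lambda>_. 0) (adv_orders K)"
    for \<omega>
  let ?E = "\<lambda>T. exp_alg_cost f0 f1 M P 2 T (\<lambda>_. K) (adv_rdc_cost K G f1) (\<lambda>_. 0) (adv_orders K)"
  have valid: "valid_costs 2 (adv_rdc_cost K G f1) (\<lambda>_. 0)"
    using G f1 by (simp add: valid_costs_adv)
  \<comment> \<open>The plan is the same for both horizons because an online policy never sees T.\<close>
  have "ennreal c \<le> ennreal A * ?E 1 + ?E (Suc K)"
    unfolding exp_alg_cost_def plan_def[symmetric]
  proof (rule prob_space.ennreal_le_nn_integral_combination[OF prob])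
    fix \<omega> assume "\<omega> \<in> space M"
    then have "adv_feasible K (Suc K) (plan \<omega>)"
      using feasible unfolding policy_feasible_def plan_def by blast
    then show "c \<le> A * adv_plan_cost f0 f1 K G 1 (plan \<omega>) + adv_plan_cost f0 f1 K G (Suc K) (plan \<omega>)
        \<and> 0 \<le> adv_plan_cost f0 f1 K G 1 (plan \<omega>) \<and> 0 \<le> adv_plan_cost f0 f1 K G (Suc K) (plan \<omega>)"
      using adv_mixture_le_plan_costs[OF _ f0 f1 G(1) mixture] plan_cost_nonneg[OF f0 _ valid] f1
      by auto
  qed (use measurable A in \<open>auto simp: plan_def\<close>)
  also have "\<dots> \<le> ennreal A * (R * ennreal f1) + R * ennreal (f0 + G + real K * f1)"
  proof (intro add_mono mult_left_mono)
    show "?E 1 \<le> R * ennreal f1"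
      unfolding R_def by (rule adv_exp_alg_cost_le[OF K _ G f0 f1 adv_OPT_one_le[OF K G(1) f0 f1]]) simp
    show "?E (Suc K) \<le> R * ennreal (f0 + G + real K * f1)"
      unfolding R_def by (rule adv_exp_alg_cost_le[OF K _ G f0 f1 adv_OPT_long_le[OF K G(1) f0 f1]]) simp
  qed simp_all
  also have "\<dots> = ennreal D * R"
    using A f1 f0 G by (simp add: D_def ennreal_plus ennreal_mult distrib_left mult_ac)
  finally have "ennreal c / ennreal D \<le> R"
    using A f1 G K by (intro divide_le_posI_ennreal) (auto simp: D_def intro!: add_nonneg_pos)
  moreover have "0 < D"
    using A f1 G K by (auto simp: D_def intro!: add_nonneg_pos)
  ultimately show ?thesis
    unfolding R_def D_def[symmetric] using c by (simp add: divide_ennreal)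
qed

lemma R_inv_ge_five_quarters:
  assumes "f0 \<le> 2 * f1"
  shows "ennreal (5 / 4) \<le> R_inv f0 f1 M P"
proof -
  have "ennreal (5 * f1 / (1 * f1 + (f0 + (2 * f1 - f0) + real 1 * f1))) \<le> R_inv f0 f1 M P"
  proof (rule R_inv_ge_adv_mixture)
    fix d :: nat assume "d \<le> 1"
    then consider "d = 0" | "d = 1" by linarith
    then show "5 * f1 \<le> (1 + 1) * first_period_cost 1 (2 * f1 - f0) f0 f1 d
        + real 1 * f1 + (f0 + (2 * f1 - f0) / real 1) * real d"
      by cases (simp_all add: first_period_cost_def)
  qed (use assms f1 in auto)
  then show ?thesis
    using f1 by simp
qed

text \<open>With K = h^2, G = (h + 1) f1 - f0 and weight h f0 / f1 - 1 on the short horizon, the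
  linear lower bound on the first-period cost exactly cancels the later penalty f0 d.\<close>
lemma R_inv_ge_square_instance_bound:
  fixes h :: nat
  assumes h: "1 \<le> h" "f1 \<le> real h * f0" "f0 \<le> real h * f1"
  shows "ennreal ((f0 + real h * (f0 + f1)) / (f0 + f1 + real h * f1)) \<le> R_inv f0 f1 M P"
proof -
  define G where "G = (real h + 1) * f1 - f0"
  define A where "A = real h * f0 / f1 - 1"
  have A: "0 \<le> A" using h f1 by (simp add: A_def field_simps)
  have "(real h + 1) * f1 = real h * f1 + f1" "0 \<le> real h * f1"
    using f1 by (simp_all add: distrib_right)
  then have G: "0 \<le> G" "0 < f0 + G"
    using h(3) f1 unfolding G_def by linarith+
  have c: "0 \<le> real h * f0 + real (h\<^sup>2) * (f0 + f1)"
    using f0 f1 by simp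
  have "ennreal ((real h * f0 + real (h\<^sup>2) * (f0 + f1)) / (A * f1 + (f0 + G + real (h\<^sup>2) * f1)))
      \<le> R_inv f0 f1 M P"
  proof (rule R_inv_ge_adv_mixture)
    fix d assume "d \<le> h\<^sup>2"
    have weight: "A + 1 = real h * f0 / f1" by (simp add: A_def)
    show "real h * f0 + real (h\<^sup>2) * (f0 + f1) \<le> (A + 1) * first_period_cost (h\<^sup>2) G f0 f1 d
        + real (h\<^sup>2) * f1 + (f0 + G / real (h\<^sup>2)) * real d"
      unfolding weight G_def by (rule first_period_cost_square_mixture[OF \<open>d \<le> h\<^sup>2\<close> h(1) f0 f1 h(3)])
  qed (use h(1) G A c in auto)
  moreover have "A * f1 + (f0 + G + real (h\<^sup>2) * f1) = real h * (f0 + f1 + real h * f1)"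
    using f1 by (simp add: A_def G_def field_simps power2_eq_square)
  moreover have "real h * f0 + real (h\<^sup>2) * (f0 + f1) = real h * (f0 + real h * (f0 + f1))"
    by (simp add: algebra_simps power2_eq_square)
  ultimately show ?thesis
    using h(1) by simp
qed

lemma R_inv_ge_one_plus_cost_ratio:
  assumes "0 < f0"
  shows "ennreal (1 + f0 / f1) \<le> R_inv f0 f1 M P"
proof (rule LIMSEQ_le_const2)
  have "(\<lambda>h. (f0 + real h * (f0 + f1)) / (f0 + f1 + real h * f1)) \<longlonglongrightarrow> 1 + f0 / f1"
    using f1 by (real_asymp simp: field_simps)
  then show "(\<lambda>h. ennreal ((f0 + real h * (f0 + f1)) / (f0 + f1 + real h * f1)))
      \<longlonglongrightarrow> ennreal (1 + f0 / f1)"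
    by (rule tendsto_ennrealI)
  show "\<exists>N. \<forall>h\<ge>N. ennreal ((f0 + real h * (f0 + f1)) / (f0 + f1 + real h * f1)) \<le> R_inv f0 f1 M P"
  proof (intro exI allI impI)
    fix h assume "nat \<lceil>max (max (f1 / f0) (f0 / f1)) 1\<rceil> \<le> h"
    then have "f1 / f0 \<le> real h" "f0 / f1 \<le> real h" "1 \<le> real h"
      by (simp_all add: nat_le_iff ceiling_le_iff)
    then show "ennreal ((f0 + real h * (f0 + f1)) / (f0 + f1 + real h * f1)) \<le> R_inv f0 f1 M P"
      using assms f1 by (intro R_inv_ge_square_instance_bound) (simp_all add: field_simps)
  qed
qed

end

theorem theorem9:
  fixes f0 f1 :: real and M :: "'w measure" and P :: "'w \<Rightarrow> policy"
  assumes "0 \<le> f0" and "0 < f1"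
    and "prob_space M"
    and "\<forall>\<omega>\<in>space M. policy_feasible (P \<omega>)"
    and "\<forall>n T I0 c0 c1 S.
           (\<lambda>\<omega>. plan_cost f0 f1 n T c0 c1 S (alg_plan (P \<omega>) n I0 c0 c1 S)) \<in> borel_measurable M"
  shows "R_inv f0 f1 M P \<ge> ennreal (max (1 + f0 / f1) (5 / 4))"
proof (cases "f0 / f1 \<le> 1 / 4")
  case True
  then have "max (1 + f0 / f1) (5 / 4) = 5 / 4"
    by (intro max_absorb2) linarith
  moreover have "f0 \<le> 2 * f1"
    using True assms(2) by (simp add: field_simps)
  ultimately show ?thesis
    using R_inv_ge_five_quarters[OF assms] by (simp only:)
next
  case False
  then have "max (1 + f0 / f1) (5 / 4) = 1 + f0 / f1"
    by (intro max_absorb1) linarith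
  moreover have "0 < f0"
    using False assms(1,2) by (auto simp: field_simps)
  ultimately show ?thesis
    using R_inv_ge_one_plus_cost_ratio[OF assms] by (simp only:)
qed

end
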